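(* Let $\theta\ge0$ and $\omega\ge0$. For arbitrary $\varphi,f\in\mathcal P^+$, the polynomial $\varphi(\Delta_{\theta,\omega})f=\sum_{k\ge0}\frac{\varphi^{(k)}(0)}{k!}\Delta_{\theta,\omega}^kf$ also belongs to $\mathcal P^+$.
   Context: $D=d/dz$, $\Delta_{\theta,\omega}=(\theta+\omega z)D+zD^2$. $\mathcal P^+$ is the set of complex polynomials of the form $C\prod_{j=1}^m(z+\pi_j)$ with $C\in\mathbb C$, $m\in\mathbb N_0$, $\pi_j\ge0$ (i.e. polynomials all of whose zeros are real and nonpositive, including constants and the zero polynomial). *)

theory Defs
  imports "HOL-Computational_Algebra.Polynomial"
begin

text \<open>The class P+ of complex polynomials C * prod_j (z + pi_j) with pi_j real, pi_j >= 0
  (includes constants and the zero polynomial).\<close>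
definition Pplus :: "complex poly set" where
  "Pplus = {p. \<exists>(C::complex) (\<pi>s::real list). (\<forall>x\<in>set \<pi>s. x \<ge> 0) \<and>
                 p = smult C (\<Prod>x\<leftarrow>\<pi>s. [:complex_of_real x, 1:])}"

definition Delta :: "real \<Rightarrow> real \<Rightarrow> complex poly \<Rightarrow> complex poly" where
  "Delta \<theta> \<omega> p = [:complex_of_real \<theta>, complex_of_real \<omega>:] * pderiv p
                    + [:0, 1:] * pderiv (pderiv p)"

text \<open>phi(Delta) f = sum_k phi^(k)(0)/k! Delta^k f; phi^(k)(0)/k! is the k-th coefficient.\<close>
definition op_apply :: "complex poly \<Rightarrow> real \<Rightarrow> real \<Rightarrow> complex poly \<Rightarrow> complex poly" where
  "op_apply \<phi> \<theta> \<omega> f = (\<Sum>k\<le>degree \<phi>. smult (coeff \<phi> k) ((Delta \<theta> \<omega> ^^ k) f))"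

end

theory Submission
  imports Defs "HOL-Computational_Algebra.Fundamental_Theorem_Algebra" "HOL-Library.Nonpos_Ints"
begin

(* Since \<phi> \<mapsto> \<phi>(\<Delta>) is multiplicative, \<phi> = C \<Prod>(z + \<pi>_j) acts as C \<Prod>(\<pi>_j + \<Delta>), so it suffices
   to show that g = c f + \<Delta> f lies in P+ whenever c \<ge> 0 and f \<in> P+.  Fix z off the ray (-\<infinity>, 0] and
   let w = sqrt z, so Re w > 0.  For p = C \<Prod>(z + \<pi>_j) \<in> P+ of positive degree,
   w p'(z) / p(z) = \<Sum>_j w / (w\<^sup>2 + \<pi>_j) has positive real part; in particular P+ is closed under
   differentiation.  If deg f \<ge> 2, then with L = w f'(z) / f(z) and M = w f''(z) / f'(z),
     g(z) = w f'(z) (c / L + \<theta> / w + \<omega> w + M),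
   and the bracket has positive real part, so g(z) \<noteq> 0.  By the fundamental theorem of algebra
   g \<in> P+.  If deg f \<le> 1, then g is a constant times a polynomial a + b z with a, b \<ge> 0. *)

lemma Delta_add: "Delta \<theta> \<omega> (p + q) = Delta \<theta> \<omega> p + Delta \<theta> \<omega> q"
  by (simp only: Delta_def pderiv_add distrib_left add_ac)

lemma Delta_smult: "Delta \<theta> \<omega> (smult c p) = smult c (Delta \<theta> \<omega> p)"
  by (simp only: Delta_def pderiv_smult mult_smult_right smult_add_right)

lemma Delta_0: "Delta \<theta> \<omega> 0 = 0"
  by (simp add: Delta_def)

lemma Delta_sum: "Delta \<theta> \<omega> (\<Sum>a\<in>A. g a) = (\<Sum>a\<in>A. Delta \<theta> \<omega> (g a))"
  by (induction A rule: infinite_finite_induct) (simp_all add: Delta_0 Delta_add)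

lemma op_apply_eq_sum_lessThan:
  assumes "degree \<phi> < N"
  shows "op_apply \<phi> \<theta> \<omega> f = (\<Sum>k<N. smult (coeff \<phi> k) ((Delta \<theta> \<omega> ^^ k) f))"
  unfolding op_apply_def using assms
  by (intro sum.mono_neutral_left) (auto simp: coeff_eq_0)

lemma op_apply_add: "op_apply (\<phi> + \<psi>) \<theta> \<omega> f = op_apply \<phi> \<theta> \<omega> f + op_apply \<psi> \<theta> \<omega> f"
proof -
  define N where "N = Suc (max (degree \<phi>) (degree \<psi>))"
  have "degree (\<phi> + \<psi>) < N" "degree \<phi> < N" "degree \<psi> < N"
    using degree_add_le_max[of \<phi> \<psi>] by (auto simp: N_def)
  then show ?thesis
    by (simp add: op_apply_eq_sum_lessThan smult_add_left sum.distrib)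
qed

lemma op_apply_smult: "op_apply (smult c \<phi>) \<theta> \<omega> f = smult c (op_apply \<phi> \<theta> \<omega> f)"
proof -
  define N where "N = Suc (degree \<phi>)"
  have "degree (smult c \<phi>) < N" "degree \<phi> < N"
    using degree_smult_le[of c \<phi>] by (auto simp: N_def)
  then show ?thesis
    by (simp add: op_apply_eq_sum_lessThan smult_smult sum_distrib_left[where r = "[:c:]", simplified])
qed

lemma op_apply_pCons:
  "op_apply (pCons a \<phi>) \<theta> \<omega> f = smult a f + Delta \<theta> \<omega> (op_apply \<phi> \<theta> \<omega> f)"
proof -
  define N where "N = Suc (degree \<phi>)"
  have "degree (pCons a \<phi>) < Suc N"
    using degree_pCons_le[of a \<phi>] by (simp add: N_def)
  then have "op_apply (pCons a \<phi>) \<theta> \<omega> f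
      = smult a f + (\<Sum>k<N. smult (coeff \<phi> k) (Delta \<theta> \<omega> ((Delta \<theta> \<omega> ^^ k) f)))"
    by (simp add: op_apply_eq_sum_lessThan sum.lessThan_Suc_shift del: sum.lessThan_Suc)
  also have "\<dots> = smult a f + Delta \<theta> \<omega> (op_apply \<phi> \<theta> \<omega> f)"
    by (simp add: op_apply_eq_sum_lessThan[of _ N] N_def Delta_sum Delta_smult del: sum.lessThan_Suc)
  finally show ?thesis .
qed

lemma op_apply_0: "op_apply 0 \<theta> \<omega> f = 0"
  by (simp add: op_apply_def)

lemma op_apply_mult: "op_apply (\<phi> * \<psi>) \<theta> \<omega> f = op_apply \<phi> \<theta> \<omega> (op_apply \<psi> \<theta> \<omega> f)"
proof (induction \<phi> rule: pCons_induct)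
  case (pCons a \<phi>)
  then show ?case
    by (simp add: op_apply_add op_apply_smult op_apply_pCons op_apply_0)
qed (simp add: op_apply_0)

lemma op_apply_linear: "op_apply [:a, 1:] \<theta> \<omega> f = smult a f + Delta \<theta> \<omega> f"
  by (simp add: op_apply_pCons op_apply_0 Delta_0)

abbreviation linear_factors :: "real list \<Rightarrow> complex poly" where
  "linear_factors \<pi>s \<equiv> \<Prod>x\<leftarrow>\<pi>s. [:complex_of_real x, 1:]"

lemma PplusI: "(\<And>x. x \<in> set \<pi>s \<Longrightarrow> 0 \<le> x) \<Longrightarrow> smult C (linear_factors \<pi>s) \<in> Pplus"
  unfolding Pplus_def by blast

lemma PplusE:
  assumes "p \<in> Pplus"
  obtains C \<pi>s where "\<And>x. x \<in> set \<pi>s \<Longrightarrow> 0 \<le> x" "p = smult C (linear_factors \<pi>s)"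
  using assms unfolding Pplus_def by blast

lemma Pplus_smult: "p \<in> Pplus \<Longrightarrow> smult c p \<in> Pplus"
  by (elim PplusE) (simp add: PplusI)

lemma Pplus_linear:
  assumes "0 \<le> a" "0 \<le> b"
  shows "[:complex_of_real a, complex_of_real b:] \<in> Pplus"
proof (cases "b = 0")
  case True
  then have "[:complex_of_real a, complex_of_real b:] = smult (complex_of_real a) (linear_factors [])"
    by simp
  then show ?thesis
    using PplusI[of "[]"] by simp
next
  case False
  then have "[:complex_of_real a, complex_of_real b:] = smult (complex_of_real b) (linear_factors [a / b])"
    by (simp add: complex_eq_iff)
  moreover have "0 \<le> a / b"
    using assms by simp
  ultimately show ?thesis
    by (metis PplusI empty_iff empty_set set_ConsD)
qed

lemma degree_linear_factors: "degree (linear_factors \<pi>s) = length \<pi>s"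
proof (induction \<pi>s)
  case (Cons x \<pi>s)
  have "linear_factors \<pi>s \<noteq> 0"
    by (auto simp: prod_list_zero_iff)
  then show ?case
    using Cons by (simp add: degree_mult_eq del: mult_pCons_left)
qed simp

lemma poly_linear_factors_neq_0:
  assumes "\<And>x. x \<in> set \<pi>s \<Longrightarrow> 0 \<le> x" and "z \<notin> \<real>\<^sub>\<le>\<^sub>0"
  shows "poly (linear_factors \<pi>s) z \<noteq> 0"
proof -
  have "z + complex_of_real x \<noteq> 0" if "x \<in> set \<pi>s" for x
    using assms(1)[OF that] assms(2) by (auto simp: complex_nonpos_Reals_iff complex_eq_iff)
  then show ?thesis
    by (induction \<pi>s) (auto simp: add.commute simp del: mult_pCons_left)
qed

lemma Pplus_if_roots_nonpos:
  assumes "\<And>z. poly p z = 0 \<Longrightarrow> z \<in> \<real>\<^sub>\<le>\<^sub>0"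
  shows "p \<in> Pplus"
proof -
  have "p \<noteq> 0"
    using assms[of 1] by auto
  obtain rs where rs: "mset rs = proots p"
    using ex_mset by blast
  have p_eq: "p = smult (lead_coeff p) (\<Prod>r\<leftarrow>rs. [:-r, 1:])"
    using complex_poly_decompose_multiset[of p] by (simp add: rs[symmetric] flip: prod_mset_prod_list)
  have "r \<in> \<real>\<^sub>\<le>\<^sub>0" if "r \<in> set rs" for r
    using assms \<open>p \<noteq> 0\<close> that by (simp flip: set_mset_mset add: rs)
  then have "(\<Prod>r\<leftarrow>rs. [:-r, 1:]) = linear_factors (map (\<lambda>r. - Re r) rs)"
    by (intro arg_cong[where f = prod_list]) (auto simp: complex_nonpos_Reals_iff complex_eq_iff)
  moreover have "0 \<le> x" if "x \<in> set (map (\<lambda>r. - Re r) rs)" for x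
    using that \<open>\<And>r. r \<in> set rs \<Longrightarrow> r \<in> \<real>\<^sub>\<le>\<^sub>0\<close> by (auto simp: complex_nonpos_Reals_iff)
  ultimately show ?thesis
    using p_eq PplusI by metis
qed

lemma poly_pderiv_prod_linear:
  fixes as :: "'a::field list"
  assumes "\<And>a. a \<in> set as \<Longrightarrow> z + a \<noteq> 0"
  shows "poly (pderiv (\<Prod>a\<leftarrow>as. [:a, 1:])) z = poly (\<Prod>a\<leftarrow>as. [:a, 1:]) z * (\<Sum>a\<leftarrow>as. 1 / (z + a))"
  using assms
proof (induction as)
  case (Cons a as)
  then have "z + a \<noteq> 0"
    by simp
  with Cons show ?case
    by (simp add: pderiv_mult pderiv_pCons field_simps del: mult_pCons_left)
qed simp

lemma Re_csqrt_pos: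
  assumes "z \<notin> \<real>\<^sub>\<le>\<^sub>0"
  shows "0 < Re (csqrt z)"
proof (rule ccontr)
  assume "\<not> 0 < Re (csqrt z)"
  then have "Re (csqrt z) = 0"
    using Re_csqrt[of z] by simp
  then have "Re ((csqrt z)\<^sup>2) \<le> 0" "Im ((csqrt z)\<^sup>2) = 0"
    by (simp_all add: power2_eq_square)
  then show False
    using assms by (simp add: complex_nonpos_Reals_iff)
qed

lemma Re_div_square_add_pos:
  assumes "0 < Re w" "0 \<le> x"
  shows "0 < Re (w / (w\<^sup>2 + complex_of_real x))"
proof -
  define d where "d = w\<^sup>2 + complex_of_real x"
  have numerator: "Re w * Re d + Im w * Im d = Re w * ((Re w)\<^sup>2 + (Im w)\<^sup>2 + x)"
    by (simp add: d_def power2_eq_square algebra_simps)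
  have "0 < (Re w)\<^sup>2 + x"
    using assms by (simp add: add_pos_nonneg)
  then have "d \<noteq> 0"
    using assms(1) by (auto simp: d_def complex_eq_iff power2_eq_square)
  then have "0 < (Re d)\<^sup>2 + (Im d)\<^sup>2"
    by (simp add: complex_eq_iff sum_power2_gt_zero_iff)
  moreover have "0 < Re w * ((Re w)\<^sup>2 + (Im w)\<^sup>2 + x)"
    using assms by (simp add: add_pos_nonneg)
  ultimately show ?thesis
    by (simp add: Re_divide numerator flip: d_def)
qed

lemma Re_of_real_div_nonneg: "0 \<le> a \<Longrightarrow> 0 < Re u \<Longrightarrow> 0 \<le> Re (complex_of_real a / u)"
  by (simp add: Re_divide)

lemma Re_csqrt_logderiv_pos:
  assumes "p \<in> Pplus" "0 < degree p" "z \<notin> \<real>\<^sub>\<le>\<^sub>0"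
  shows "0 < Re (csqrt z * poly (pderiv p) z / poly p z)"
proof -
  obtain C \<pi>s where nonneg: "\<And>x. x \<in> set \<pi>s \<Longrightarrow> 0 \<le> x" and p: "p = smult C (linear_factors \<pi>s)"
    using assms(1) by (blast elim: PplusE)
  have "C \<noteq> 0 \<and> \<pi>s \<noteq> []"
    using assms(2) by (simp add: p degree_linear_factors split: if_splits)
  define w where "w = csqrt z"
  have "0 < Re w"
    using Re_csqrt_pos[OF assms(3)] by (simp add: w_def)
  have "z + complex_of_real x \<noteq> 0" if "x \<in> set \<pi>s" for x
    using nonneg[OF that] assms(3) by (auto simp: complex_nonpos_Reals_iff complex_eq_iff)
  then have "poly (pderiv (linear_factors \<pi>s)) z
      = poly (linear_factors \<pi>s) z * (\<Sum>x\<leftarrow>\<pi>s. 1 / (z + complex_of_real x))"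
    using poly_pderiv_prod_linear[of "map complex_of_real \<pi>s" z] by (force simp: o_def)
  moreover have "poly (linear_factors \<pi>s) z \<noteq> 0"
    using nonneg assms(3) by (rule poly_linear_factors_neq_0)
  ultimately have "poly (pderiv p) z / poly p z = (\<Sum>x\<leftarrow>\<pi>s. 1 / (z + complex_of_real x))"
    using \<open>C \<noteq> 0 \<and> \<pi>s \<noteq> []\<close> by (simp add: p pderiv_smult)
  then have "csqrt z * poly (pderiv p) z / poly p z = w * (\<Sum>x\<leftarrow>\<pi>s. 1 / (w\<^sup>2 + complex_of_real x))"
    unfolding w_def power2_csqrt by (metis times_divide_eq_right)
  also have "\<dots> = (\<Sum>x\<leftarrow>\<pi>s. w / (w\<^sup>2 + complex_of_real x))"
    by (simp flip: sum_list_const_mult)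
  also have "Re \<dots> = (\<Sum>x\<leftarrow>\<pi>s. Re (w / (w\<^sup>2 + complex_of_real x)))"
    by (induction \<pi>s) simp_all
  also have "\<dots> > (\<Sum>x\<leftarrow>\<pi>s. 0)"
    using \<open>C \<noteq> 0 \<and> \<pi>s \<noteq> []\<close> Re_div_square_add_pos[OF \<open>0 < Re w\<close> nonneg]
    by (intro sum_list_strict_mono) auto
  finally show ?thesis
    by simp
qed

lemma poly_Pplus_neq_0: "p \<in> Pplus \<Longrightarrow> p \<noteq> 0 \<Longrightarrow> z \<notin> \<real>\<^sub>\<le>\<^sub>0 \<Longrightarrow> poly p z \<noteq> 0"
  by (elim PplusE) (auto simp: poly_linear_factors_neq_0)

lemma Pplus_pderiv:
  assumes "p \<in> Pplus"
  shows "pderiv p \<in> Pplus"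
proof (cases "degree p = 0")
  case True
  then show ?thesis
    using Pplus_smult[OF assms, of 0] by (simp flip: pderiv_eq_0_iff)
next
  case False
  show ?thesis
  proof (rule Pplus_if_roots_nonpos, rule ccontr)
    fix z
    assume "poly (pderiv p) z = 0" "z \<notin> \<real>\<^sub>\<le>\<^sub>0"
    then show False
      using Re_csqrt_logderiv_pos[OF assms _ \<open>z \<notin> \<real>\<^sub>\<le>\<^sub>0\<close>] False by simp
  qed
qed

lemma poly_smult_add_Delta_neq_0:
  assumes "0 \<le> \<theta>" "0 \<le> \<omega>" "0 \<le> c"
    and f: "f \<in> Pplus" "2 \<le> degree f" and z: "z \<notin> \<real>\<^sub>\<le>\<^sub>0"
  shows "poly (smult (complex_of_real c) f + Delta \<theta> \<omega> f) z \<noteq> 0"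
proof -
  define w where "w = csqrt z"
  define F0 F1 F2 where "F0 = poly f z" and "F1 = poly (pderiv f) z"
    and "F2 = poly (pderiv (pderiv f)) z"
  define L M where "L = w * F1 / F0" and "M = w * F2 / F1"
  have "0 < Re w"
    using Re_csqrt_pos[OF z] by (simp add: w_def)
  have "0 < Re L"
    using Re_csqrt_logderiv_pos[OF f(1) _ z] f(2) by (simp add: L_def w_def F0_def F1_def)
  have "0 < Re M"
    using Re_csqrt_logderiv_pos[OF Pplus_pderiv[OF f(1)] _ z] f(2)
    by (simp add: M_def w_def F1_def F2_def degree_pderiv)
  have "f \<noteq> 0"
    using f(2) by auto
  then have "F0 \<noteq> 0"
    using poly_Pplus_neq_0[OF f(1) _ z] by (simp add: F0_def)
  have "w \<noteq> 0" "F1 \<noteq> 0"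
    using \<open>0 < Re w\<close> \<open>0 < Re L\<close> by (auto simp: L_def)
  have "z = w * w"
    by (simp add: w_def flip: power2_eq_square)
  have "poly (smult (complex_of_real c) f + Delta \<theta> \<omega> f) z = c * F0 + (\<theta> + \<omega> * z) * F1 + z * F2"
    by (simp add: Delta_def F0_def F1_def F2_def algebra_simps)
  also have "\<dots> = w * F1 * (c / L + \<theta> / w + \<omega> * w + M)"
    using \<open>w \<noteq> 0\<close> \<open>F0 \<noteq> 0\<close> \<open>F1 \<noteq> 0\<close> by (simp add: L_def M_def \<open>z = w * w\<close> field_simps)
  finally have factored: "poly (smult (complex_of_real c) f + Delta \<theta> \<omega> f) z
      = w * F1 * (c / L + \<theta> / w + \<omega> * w + M)" .
  have "0 \<le> \<omega> * Re w"
    using assms(2) \<open>0 < Re w\<close> by simp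
  then have "0 < Re (c / L + \<theta> / w + \<omega> * w + M)"
    using Re_of_real_div_nonneg[OF \<open>0 \<le> c\<close> \<open>0 < Re L\<close>] Re_of_real_div_nonneg[OF \<open>0 \<le> \<theta>\<close> \<open>0 < Re w\<close>]
      \<open>0 < Re M\<close> by simp
  then have "c / L + \<theta> / w + \<omega> * w + M \<noteq> 0"
    by (metis less_irrefl zero_complex.sel(1))
  then show ?thesis
    unfolding factored using \<open>w \<noteq> 0\<close> \<open>F1 \<noteq> 0\<close> by simp
qed

lemma Pplus_smult_add_Delta:
  assumes "0 \<le> \<theta>" "0 \<le> \<omega>" "0 \<le> c" "f \<in> Pplus"
  shows "smult (complex_of_real c) f + Delta \<theta> \<omega> f \<in> Pplus"
proof -
  obtain C \<pi>s where nonneg: "\<And>x. x \<in> set \<pi>s \<Longrightarrow> 0 \<le> x" and f: "f = smult C (linear_factors \<pi>s)"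
    using assms(4) by (blast elim: PplusE)
  consider "C = 0" | "\<pi>s = []" | a where "\<pi>s = [a]" | a b rest where "C \<noteq> 0" "\<pi>s = a # b # rest"
    by (metis list.exhaust)
  then show ?thesis
  proof cases
    case 1
    then show ?thesis
      using Pplus_smult[OF assms(4), of 0] by (simp add: f Delta_0)
  next
    case 2
    then have "Delta \<theta> \<omega> f = 0"
      by (simp add: f Delta_def)
    then show ?thesis
      using Pplus_smult[OF assms(4)] by simp
  next
    case (3 a)
    then have "0 \<le> a"
      using nonneg by simp
    then have "[:complex_of_real (c * a + \<theta>), complex_of_real (c + \<omega>):] \<in> Pplus"
      using assms by (intro Pplus_linear) simp_all
    moreover have "smult (complex_of_real c) f + Delta \<theta> \<omega> f
        = smult C [:complex_of_real (c * a + \<theta>), complex_of_real (c + \<omega>):]"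
      using 3 by (simp add: f Delta_def pderiv_smult pderiv_pCons algebra_simps)
    ultimately show ?thesis
      by (metis Pplus_smult)
  next
    case (4 a b rest)
    have "degree f = length \<pi>s"
      using \<open>C \<noteq> 0\<close> by (simp add: f degree_linear_factors)
    with 4 have "2 \<le> degree f"
      by simp
    then show ?thesis
      using Pplus_if_roots_nonpos poly_smult_add_Delta_neq_0[OF assms] by blast
  qed
qed

lemma op_apply_linear_factors_Pplus:
  assumes "0 \<le> \<theta>" "0 \<le> \<omega>" "f \<in> Pplus" "\<And>x. x \<in> set \<pi>s \<Longrightarrow> 0 \<le> x"
  shows "op_apply (linear_factors \<pi>s) \<theta> \<omega> f \<in> Pplus"
  using assms(4)
proof (induction \<pi>s)
  case Nil
  then show ?case
    using assms(3) by (simp add: op_apply_def)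
next
  case (Cons x \<pi>s)
  then show ?case
    using Pplus_smult_add_Delta[OF assms(1,2)]
    by (simp add: op_apply_mult op_apply_linear del: mult_pCons_left)
qed

theorem lemma2:
  fixes \<theta> \<omega> :: real and \<phi> f :: "complex poly"
  assumes "\<theta> \<ge> 0" and "\<omega> \<ge> 0" and "\<phi> \<in> Pplus" and "f \<in> Pplus"
  shows "op_apply \<phi> \<theta> \<omega> f \<in> Pplus"
proof -
  obtain C \<pi>s where "\<And>x. x \<in> set \<pi>s \<Longrightarrow> 0 \<le> x" "\<phi> = smult C (linear_factors \<pi>s)"
    using assms(3) by (blast elim: PplusE)
  then show ?thesis
    using op_apply_linear_factors_Pplus[OF assms(1,2,4)] by (simp add: op_apply_smult Pplus_smult)
qed

end
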